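(* Let $i\ge1$ and $i+2\le s\le r$, and let $\mathcal H$ be an $s$-graph with $\Delta_i(\mathcal H)\le\binom{r-i}{s-i}$. If $\mathcal H(I)\cong K^{(s-i)}_{r-i}$ for every $I\in\partial_i(\mathcal H)$, then $\mathcal H$ is a packing shadow $\partial_sP(i,r)$, i.e. $\mathcal H=\partial_s(\mathcal A)$ for some $P(i,r)$ $\mathcal A$.
   Context: An $s$-graph is a family of $s$-subsets (edges) of a vertex set $V$. For $|I|=i<s$, $\mathcal H(I)=\{E\setminus I: I\subseteq E\in\mathcal H\}$, an $(s-i)$-graph whose vertex set is the union of its edges; $d_{\mathcal H}(I)$ is the number of edges containing $I$, and $\Delta_i(\mathcal H)=\max_{|I|=i}d_{\mathcal H}(I)$. $\partial_q(\mathcal A)=\bigcup_{A\in\mathcal A}\binom{A}{q}$. $K^{(a)}_b$ is the complete $a$-graph on $b$ vertices. A $P(i,r)$ is a family of $r$-sets any two distinct members of which share fewer than $i$ elements; a packing shadow $\partial_sP(i,r)$ is the $s$-shadow of some $P(i,r)$. *)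

theory Defs
  imports Main
begin

definition s_graph :: "nat \<Rightarrow> 'a set set \<Rightarrow> bool" where
  "s_graph s H \<longleftrightarrow> (\<forall>E\<in>H. finite E \<and> card E = s)"

definition link :: "'a set set \<Rightarrow> 'a set \<Rightarrow> 'a set set" where
  "link H I = {E - I | E. E \<in> H \<and> I \<subseteq> E}"

definition deg :: "'a set set \<Rightarrow> 'a set \<Rightarrow> nat" where
  "deg H I = card {E \<in> H. I \<subseteq> E}"

definition shadow :: "nat \<Rightarrow> 'a set set \<Rightarrow> 'a set set" where
  "shadow q A = (\<Union>X\<in>A. {Y. Y \<subseteq> X \<and> card Y = q})"

definition verts :: "'a set set \<Rightarrow> 'a set" where
  "verts H = \<Union>H"

(* G is (isomorphic to) the complete a-graph on b vertices: a hypergraph whose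
   vertex set is the union of its edges is isomorphic to K^(a)_b iff its vertex
   set has exactly b elements and its edges are all a-subsets of it. *)
definition is_complete :: "nat \<Rightarrow> nat \<Rightarrow> 'a set set \<Rightarrow> bool" where
  "is_complete a b G \<longleftrightarrow> finite (verts G) \<and> card (verts G) = b \<and>
      G = {Y. Y \<subseteq> verts G \<and> card Y = a}"

definition packing :: "nat \<Rightarrow> nat \<Rightarrow> 'a set set \<Rightarrow> bool" where
  "packing i r A \<longleftrightarrow> (\<forall>X\<in>A. finite X \<and> card X = r) \<and>
      (\<forall>X\<in>A. \<forall>Y\<in>A. X \<noteq> Y \<longrightarrow> card (X \<inter> Y) < i)"

end

theory Submission
  imports Defs
begin

text \<open>
  Every \<open>i\<close>-set \<open>I\<close> of the shadow spans the \<open>r\<close>-set \<open>span I = I \<union> V(\<H>(I))\<close>, and every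
  \<open>s\<close>-subset of \<open>span I\<close> containing \<open>I\<close> is an edge. Exchanging one vertex of \<open>I\<close> for a
  vertex of \<open>span I\<close> gives a set \<open>J\<close> of the shadow with \<open>span J = span I\<close>: since \<open>s - i \<ge> 2\<close>,
  every further vertex of \<open>span I\<close> lies in a common edge with \<open>I\<close> and the new vertex, so
  \<open>span I \<subseteq> span J\<close>, and both have \<open>r\<close> elements. Repeated exchanges show that \<open>span\<close> is
  constant on the \<open>i\<close>-subsets of \<open>span I\<close>. Hence distinct spans share fewer than
  \<open>i\<close> vertices, and their \<open>s\<close>-shadow is exactly \<open>\<H>\<close>.
\<close>

lemma obtain_superset_with_card:
  assumes "finite V" "T \<subseteq> V" "card T \<le> k" "k \<le> card V"
  obtains S where "T \<subseteq> S" "S \<subseteq> V" "card S = k"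
proof -
  have "k - card T \<le> card (V - T)"
    using assms by (simp add: card_Diff_subset finite_subset)
  then obtain U where U: "U \<subseteq> V - T" "card U = k - card T"
    using obtain_subset_with_card_n by metis
  have "finite T" "finite U"
    using assms U finite_subset by (blast, meson finite_Diff)
  then have "card (T \<union> U) = card T + card U"
    using U by (intro card_Un_disjoint) auto
  then show ?thesis
    using that[of "T \<union> U"] U assms by auto
qed

locale complete_links =
  fixes H :: "'a set set" and i s r :: nat
  assumes i_pos: "i \<ge> 1" and i_s: "i + 2 \<le> s" and s_r: "s \<le> r"
    and s_graph: "s_graph s H"
    and complete: "\<forall>I\<in>shadow i H. is_complete (s - i) (r - i) (link H I)"
begin

definition span :: "'a set \<Rightarrow> 'a set" where
  "span I = I \<union> verts (link H I)"

lemma shadow_iff: "I \<in> shadow i H \<longleftrightarrow> card I = i \<and> (\<exists>E\<in>H. I \<subseteq> E)"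
  unfolding shadow_def by auto

lemma finite_shadow_set: "I \<in> shadow i H \<Longrightarrow> finite I"
  using i_pos by (intro card_ge_0_finite) (simp add: shadow_iff)

lemma link_verts_complete:
  assumes "I \<in> shadow i H"
  shows "link H I = {Y. Y \<subseteq> verts (link H I) \<and> card Y = s - i}"
    and "finite (verts (link H I))" "card (verts (link H I)) = r - i"
  using complete assms unfolding is_complete_def by auto

lemma link_verts_disjoint: "verts (link H I) \<inter> I = {}"
  unfolding verts_def link_def by auto

lemma finite_span: "I \<in> shadow i H \<Longrightarrow> finite (span I)"
  unfolding span_def using link_verts_complete finite_shadow_set by auto

lemma card_span: "I \<in> shadow i H \<Longrightarrow> card (span I) = r"
proof -
  assume I: "I \<in> shadow i H"
  have "card (span I) = card I + card (verts (link H I))"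
    unfolding span_def using I link_verts_complete finite_shadow_set link_verts_disjoint[of I]
    by (intro card_Un_disjoint) auto
  then show ?thesis
    using I link_verts_complete i_s s_r by (auto simp: shadow_iff)
qed

lemma edge_subset_span: "E \<in> H \<Longrightarrow> I \<subseteq> E \<Longrightarrow> E \<subseteq> span I"
  unfolding span_def verts_def link_def by blast

lemma edge_of_subset_span:
  assumes I: "I \<in> shadow i H" and "I \<subseteq> S" "S \<subseteq> span I" "card S = s"
  shows "S \<in> H"
proof -
  have "finite S"
    using finite_span[OF I] assms(3) finite_subset by blast
  then have "card (S - I) = s - i"
    using assms by (simp add: card_Diff_subset finite_subset shadow_iff)
  moreover have "S - I \<subseteq> verts (link H I)"
    using assms(3) unfolding span_def by auto
  ultimately have "S - I \<in> link H I"
    using link_verts_complete(1)[OF I] by auto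
  then obtain E where "E \<in> H" "I \<subseteq> E" "E - I = S - I"
    unfolding link_def by auto
  moreover from this \<open>I \<subseteq> S\<close> have "E = S"
    by blast
  ultimately show ?thesis
    by simp
qed

lemma edge_through_link_verts:
  assumes I: "I \<in> shadow i H" and "T \<subseteq> verts (link H I)" "card T \<le> s - i"
  obtains E where "E \<in> H" "I \<union> T \<subseteq> E"
proof -
  have "s - i \<le> card (verts (link H I))"
    using link_verts_complete(3)[OF I] s_r by simp
  then obtain S where S: "T \<subseteq> S" "S \<subseteq> verts (link H I)" "card S = s - i"
    using obtain_superset_with_card[OF link_verts_complete(2)[OF I] assms(2,3)] by blast
  have "card (I \<union> S) = card I + card S"
    using S link_verts_disjoint[of I] link_verts_complete(2)[OF I] finite_shadow_set[OF I]
      finite_subset by (intro card_Un_disjoint) auto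
  then have "card (I \<union> S) = s"
    using S I i_s by (auto simp: shadow_iff)
  then have "I \<union> S \<in> H"
    using S by (intro edge_of_subset_span[OF I]) (auto simp: span_def)
  with S that show ?thesis
    by blast
qed

lemma exchange_preserves_span:
  assumes I: "I \<in> shadow i H" and "x \<in> I" "y \<in> span I" "y \<notin> I"
  defines "J \<equiv> insert y (I - {x})"
  shows "J \<in> shadow i H" and "span J = span I"
proof -
  have y: "y \<in> verts (link H I)"
    using assms(3,4) unfolding span_def by auto
  have card_J: "card J = i"
    using assms finite_shadow_set[OF I] i_pos by (simp add: card_insert_if shadow_iff)
  have pair_in_edge: "\<exists>E\<in>H. I \<union> {y, z} \<subseteq> E" if "z \<in> verts (link H I)" for z
  proof -
    have "card {y, z} \<le> s - i"
      using i_s by (auto simp: card_insert_if)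
    then show ?thesis
      using edge_through_link_verts[OF I, of "{y, z}"] y that by blast
  qed
  then obtain E where "E \<in> H" "I \<union> {y} \<subseteq> E"
    using y by blast
  then show J_shadow: "J \<in> shadow i H"
    using card_J by (auto simp: shadow_iff J_def)
  have "span I \<subseteq> span J"
  proof
    fix z assume z: "z \<in> span I"
    have "\<exists>E'\<in>H. I \<union> {y, z} \<subseteq> E'"
    proof (cases "z \<in> I")
      case True
      then show ?thesis
        using \<open>E \<in> H\<close> \<open>I \<union> {y} \<subseteq> E\<close> by auto
    next
      case False
      then show ?thesis
        using z pair_in_edge unfolding span_def by blast
    qed
    then obtain E' where "E' \<in> H" "I \<union> {y, z} \<subseteq> E'"
      by blast
    then show "z \<in> span J"
      using edge_subset_span[of E' J] by (auto simp: J_def)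
  qed
  then show "span J = span I"
    using card_span[OF J_shadow] card_span[OF I] finite_span[OF J_shadow]
    by (intro card_subset_eq[symmetric]) auto
qed

lemma span_constant:
  assumes "I \<in> shadow i H" "J \<subseteq> span I" "card J = i"
  shows "J \<in> shadow i H \<and> span J = span I"
  using assms
proof (induction "card (J - I)" arbitrary: I)
  case 0
  have "finite J"
    using 0 finite_span finite_subset by blast
  then have "J \<subseteq> I"
    using "0.hyps" by auto
  then have "J = I"
    using card_subset_eq[OF finite_shadow_set[OF "0.prems"(1)]] "0.prems" by (simp add: shadow_iff)
  then show ?case
    using 0 by simp
next
  case (Suc n)
  have fin: "finite I" "finite J"
    using Suc finite_shadow_set finite_span finite_subset by blast+
  have "J - I \<noteq> {}"
    using "Suc.hyps"(2) by force
  then obtain y where y: "y \<in> J" "y \<notin> I"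
    by blast
  have "card (I - J) = card (J - I)"
    using fin Suc.prems by (simp add: card_Diff_subset_Int Int_commute shadow_iff)
  then have "I - J \<noteq> {}"
    using "Suc.hyps"(2) by force
  then obtain x where x: "x \<in> I" "x \<notin> J"
    by blast
  let ?I' = "insert y (I - {x})"
  have I': "?I' \<in> shadow i H" "span ?I' = span I"
    using exchange_preserves_span[OF Suc.prems(1) x(1) _ y(2)] y Suc.prems(2) by auto
  have "J - ?I' = (J - I) - {y}"
    using x by auto
  then have "n = card (J - ?I')"
    using "Suc.hyps"(2) y fin by simp
  then show ?case
    using Suc.hyps(1)[of ?I'] I' Suc.prems by auto
qed

lemma packing_spans: "packing i r (span ` shadow i H)"
  unfolding packing_def
proof (intro conjI ballI impI)
  show "finite X" "card X = r" if "X \<in> span ` shadow i H" for X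
    using that finite_span card_span by auto
next
  fix X Y assume "X \<in> span ` shadow i H" "Y \<in> span ` shadow i H" "X \<noteq> Y"
  then obtain I J where I: "I \<in> shadow i H" "X = span I" and J: "J \<in> shadow i H" "Y = span J"
    by auto
  show "card (X \<inter> Y) < i"
  proof (rule ccontr)
    assume "\<not> card (X \<inter> Y) < i"
    then obtain K where "K \<subseteq> X \<inter> Y" "card K = i"
      using obtain_subset_with_card_n by (metis not_less)
    then have "span K = X" "span K = Y"
      using span_constant[OF I(1), of K] span_constant[OF J(1), of K] I J by auto
    with \<open>X \<noteq> Y\<close> show False
      by simp
  qed
qed

lemma obtain_i_subset:
  assumes "card E = s"
  obtains I where "I \<subseteq> E" "card I = i"
  using obtain_subset_with_card_n[of i E] assms i_s by auto

lemma shadow_spans: "H = shadow s (span ` shadow i H)"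
proof
  show "H \<subseteq> shadow s (span ` shadow i H)"
  proof
    fix E assume E: "E \<in> H"
    then have card_E: "card E = s"
      using s_graph unfolding s_graph_def by auto
    then obtain I where I: "I \<subseteq> E" "card I = i"
      by (rule obtain_i_subset)
    then have "I \<in> shadow i H"
      using E by (auto simp: shadow_iff)
    moreover have "E \<subseteq> span I"
      using E I(1) by (rule edge_subset_span)
    ultimately show "E \<in> shadow s (span ` shadow i H)"
      unfolding shadow_def using card_E by (intro UN_I[of "span I"]) auto
  qed
next
  show "shadow s (span ` shadow i H) \<subseteq> H"
  proof
    fix S assume "S \<in> shadow s (span ` shadow i H)"
    then obtain I where I: "I \<in> shadow i H" "S \<subseteq> span I" "card S = s"
      unfolding shadow_def by auto
    obtain J where "J \<subseteq> S" "card J = i"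
      using I(3) by (rule obtain_i_subset)
    moreover have "J \<in> shadow i H" "span J = span I"
      using span_constant[OF I(1), of J] \<open>J \<subseteq> S\<close> \<open>card J = i\<close> I(2) by auto
    ultimately show "S \<in> H"
      using edge_of_subset_span[of J S] I by simp
  qed
qed

end

theorem mainTheorem13:
  fixes H :: "'a set set" and i s r :: nat
  assumes "i \<ge> 1" and "i + 2 \<le> s" and "s \<le> r"
    and "finite H" and "s_graph s H"
    and "\<forall>I. card I = i \<longrightarrow> deg H I \<le> (r - i) choose (s - i)"
    and "\<forall>I\<in>shadow i H. is_complete (s - i) (r - i) (link H I)"
  shows "\<exists>A. packing i r A \<and> H = shadow s A"
proof -
  interpret complete_links H i s r
    using assms by unfold_locales auto
  show ?thesis
    using packing_spans shadow_spans by blast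
qed

end
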